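(* Let $\mathbb{A}$ be an epistemic Heyting algebra and $a\in\mathbb{A}$. If $b\in\mathsf{Min}_i(\mathbb{A})$ and $b\wedge a\neq\bot$, then $[b]\in\mathsf{Min}_i(\mathbb{A}^a)$.
   Context: Fix a set $\mathsf{Ag}$ of agents. A monadic Heyting algebra is a Heyting algebra $\mathbb{L}$ with, for each $i\in\mathsf{Ag}$, monotone unary operations $\lozenge_i,\Box_i$ such that for all $a,b$: $a\leq\lozenge_i a$; $\Box_i a\leq a$; $\lozenge_i(a\vee b)\leq\lozenge_i a\vee\lozenge_i b$; $\Box_i(a\to b)\leq\Box_i a\to\Box_i b$; $\lozenge_i a\leq\Box_i\lozenge_i a$; $\lozenge_i\Box_i a\leq\Box_i a$; $\Box_i(a\to b)\leq\lozenge_i a\to\lozenge_i b$; $\lozenge_i\bot\leq\bot$; $\top\leq\Box_i\top$. An epistemic Heyting algebra is a finite monadic Heyting algebra with $\lozenge_i a\vee\neg\lozenge_i a=\top$ for all $i,a$. An element $c$ of such an algebra is $i$-minimal if $c\neq\bot$, $\lozenge_i c=c$, and whenever $d<c$ and $\lozenge_i d=d$ then $d=\bot$; $\mathsf{Min}_i(\cdot)$ is the set of $i$-minimal elements. The pseudo-quotient algebra $\mathbb{A}^a$: $b\cong_a c$ iff $b\wedge a=c\wedge a$; its carrier is the quotient Heyting algebra $\mathbb{L}/{\cong_a}$ (classes $[c]$, so $[b]\leq[c]$ iff $b\wedge a\leq c\wedge a$); $\lozenge^a_i[b]=[\lozenge_i(b\wedge a)]$ and $\Box^a_i[b]=[\Box_i(a\to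 b)]$. $i$-minimality in $\mathbb{A}^a$ is w.r.t. $\lozenge^a_i$. *)

theory Defs
  imports Main
begin

text \<open>Distributivity follows.\<close>

definition heyting_imp :: "('a::bounded_lattice \<Rightarrow> 'a \<Rightarrow> 'a) \<Rightarrow> bool" where
  "heyting_imp imp \<longleftrightarrow> (\<forall>a b c. inf c a \<le> b \<longleftrightarrow> c \<le> imp a b)"

definition monadic_HA ::
  "('a::bounded_lattice \<Rightarrow> 'a \<Rightarrow> 'a) \<Rightarrow> ('i \<Rightarrow> 'a \<Rightarrow> 'a) \<Rightarrow> ('i \<Rightarrow> 'a \<Rightarrow> 'a) \<Rightarrow> bool" where
  "monadic_HA imp dia box \<longleftrightarrow> heyting_imp imp \<and>
     (\<forall>i. mono (dia i) \<and> mono (box i) \<and>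
       (\<forall>a b.
          a \<le> dia i a \<and>
          box i a \<le> a \<and>
          dia i (sup a b) \<le> sup (dia i a) (dia i b) \<and>
          box i (imp a b) \<le> imp (box i a) (box i b) \<and>
          dia i a \<le> box i (dia i a) \<and>
          dia i (box i a) \<le> box i a \<and>
          box i (imp a b) \<le> imp (dia i a) (dia i b) \<and>
          dia i bot \<le> bot \<and>
          top \<le> box i top))"

definition epistemic_HA ::
  "('a::bounded_lattice \<Rightarrow> 'a \<Rightarrow> 'a) \<Rightarrow> ('i \<Rightarrow> 'a \<Rightarrow> 'a) \<Rightarrow> ('i \<Rightarrow> 'a \<Rightarrow> 'a) \<Rightarrow> bool" where
  "epistemic_HA imp dia box \<longleftrightarrow> finite (UNIV :: 'a set) \<and> monadic_HA imp dia box \<and>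
     (\<forall>i a. sup (dia i a) (imp (dia i a) bot) = top)"

definition is_min :: "('i \<Rightarrow> 'a::bounded_lattice \<Rightarrow> 'a) \<Rightarrow> 'i \<Rightarrow> 'a \<Rightarrow> bool" where
  "is_min dia i c \<longleftrightarrow> c \<noteq> bot \<and> dia i c = c \<and>
     (\<forall>d. d < c \<and> dia i d = d \<longrightarrow> d = bot)"

text \<open>The pseudo-quotient algebra A^a, presented on representatives:
  classes [b] with [b] = [c] iff b \<and> a = c \<and> a, [b] \<le> [c] iff b \<and> a \<le> c \<and> a,
  bottom class [\<bottom>], and \<open>dia^a_i [b] = [dia_i (b \<and> a)]\<close>.\<close>
definition q_eq :: "'a::bounded_lattice \<Rightarrow> 'a \<Rightarrow> 'a \<Rightarrow> bool" where
  "q_eq a b c \<longleftrightarrow> inf b a = inf c a"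

definition q_le :: "'a::bounded_lattice \<Rightarrow> 'a \<Rightarrow> 'a \<Rightarrow> bool" where
  "q_le a b c \<longleftrightarrow> inf b a \<le> inf c a"

definition q_less :: "'a::bounded_lattice \<Rightarrow> 'a \<Rightarrow> 'a \<Rightarrow> bool" where
  "q_less a b c \<longleftrightarrow> q_le a b c \<and> \<not> q_eq a b c"

definition q_dia :: "('i \<Rightarrow> 'a::bounded_lattice \<Rightarrow> 'a) \<Rightarrow> 'a \<Rightarrow> 'i \<Rightarrow> 'a \<Rightarrow> 'a" where
  "q_dia dia a i b = dia i (inf b a)"

definition q_box :: "('a::bounded_lattice \<Rightarrow> 'a \<Rightarrow> 'a) \<Rightarrow> ('i \<Rightarrow> 'a \<Rightarrow> 'a) \<Rightarrow> 'a \<Rightarrow> 'i \<Rightarrow> 'a \<Rightarrow> 'a" where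
  "q_box imp box a i b = box i (imp a b)"

definition is_min_q :: "('i \<Rightarrow> 'a::bounded_lattice \<Rightarrow> 'a) \<Rightarrow> 'a \<Rightarrow> 'i \<Rightarrow> 'a \<Rightarrow> bool" where
  "is_min_q dia a i c \<longleftrightarrow> \<not> q_eq a c bot \<and> q_eq a (q_dia dia a i c) c \<and>
     (\<forall>d. q_less a d c \<and> q_eq a (q_dia dia a i d) d \<longrightarrow> q_eq a d bot)"

end

theory Submission
  imports Defs
begin

text \<open>Each \<open>\<diamond>\<^sub>i\<close> is a closure operator, so \<open>\<diamond>\<^sub>i\<close> sends any nonzero element below an
  \<open>i\<close>-minimal \<open>b\<close> to a nonzero fixed point below \<open>b\<close>, i.e. to \<open>b\<close> itself. Since
  \<open>\<diamond>\<^sup>a\<^sub>i[x] = [\<diamond>\<^sub>i(x \<and> a)]\<close>, this gives \<open>\<diamond>\<^sup>a\<^sub>i[b] = [b]\<close> when \<open>b \<and> a \<noteq> \<bottom>\<close>, and a fixed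
  point \<open>[d] < [b]\<close> with \<open>d \<and> a \<noteq> \<bottom>\<close> would satisfy \<open>[d] = [\<diamond>\<^sub>i(d \<and> a)] = [b]\<close>.\<close>

definition closure_operator :: "('a::order \<Rightarrow> 'a) \<Rightarrow> bool" where
  "closure_operator f \<longleftrightarrow> mono f \<and> (\<forall>x. x \<le> f x) \<and> (\<forall>x. f (f x) = f x)"

lemma monadic_HA_dia_closure_operator:
  assumes "monadic_HA imp dia box"
  shows "closure_operator (dia i)"
proof -
  have infl: "x \<le> dia i x" for x
    using assms unfolding monadic_HA_def by blast
  have "dia i (dia i x) = dia i x" for x
  proof -
    have "box i (dia i x) = dia i x"
      using assms unfolding monadic_HA_def by (blast intro: order.antisym)
    moreover have "dia i (box i (dia i x)) \<le> box i (dia i x)"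
      using assms unfolding monadic_HA_def by blast
    ultimately show ?thesis using infl by (simp add: order.antisym)
  qed
  with infl assms show ?thesis
    unfolding closure_operator_def monadic_HA_def by blast
qed

lemma is_min_dia_eq:
  fixes b x :: "'a::bounded_lattice"
  assumes "closure_operator (dia i)" and "is_min dia i b"
    and "x \<le> b" and "x \<noteq> bot"
  shows "dia i x = b"
proof -
  have "dia i x \<le> b"
    using assms monoD[of "dia i" x b] unfolding closure_operator_def is_min_def by metis
  moreover have "dia i (dia i x) = dia i x" and "dia i x \<noteq> bot"
    using assms unfolding closure_operator_def by (metis bot_unique)+
  ultimately show ?thesis
    using assms(2) unfolding is_min_def by (metis order.not_eq_order_implies_strict)
qed

lemma is_min_q_if_is_min:
  fixes a b :: "'a::bounded_lattice"
  assumes closure: "closure_operator (dia i)" and min: "is_min dia i b"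
    and meet: "inf b a \<noteq> bot"
  shows "is_min_q dia a i b"
proof -
  have "dia i (inf b a) = b"
    using is_min_dia_eq[OF closure min _ meet] by simp
  hence fixed: "q_eq a (q_dia dia a i b) b"
    unfolding q_eq_def q_dia_def by simp
  have "q_eq a d bot" if "q_less a d b" and "q_eq a (q_dia dia a i d) d" for d
  proof (rule ccontr)
    assume "\<not> q_eq a d bot"
    hence "inf d a \<noteq> bot" unfolding q_eq_def by simp
    moreover have "inf d a \<le> b"
      using \<open>q_less a d b\<close> unfolding q_less_def q_le_def by (meson le_infE)
    ultimately have "dia i (inf d a) = b"
      using is_min_dia_eq[OF closure min] by blast
    with that show False
      unfolding q_less_def q_eq_def q_dia_def by simp
  qed
  with fixed meet show ?thesis
    unfolding is_min_q_def q_eq_def by simp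
qed

theorem lemma4:
  fixes imp :: "'a::bounded_lattice \<Rightarrow> 'a \<Rightarrow> 'a"
    and dia box :: "'i \<Rightarrow> 'a \<Rightarrow> 'a"
    and a b :: 'a and i :: 'i
  assumes "epistemic_HA imp dia box"
    and "is_min dia i b"
    and "inf b a \<noteq> bot"
  shows "is_min_q dia a i b"
proof -
  have "closure_operator (dia i)"
    using assms(1) unfolding epistemic_HA_def by (blast intro: monadic_HA_dia_closure_operator)
  then show ?thesis using assms(2,3) by (rule is_min_q_if_is_min)
qed

end
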